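(* Let $f\in\mathcal{H}$ be strongly non-polynomial with $f(t)\gg t^\delta$ for some $\delta>0$. Then: (i) the class $S(f,k)$ is non-empty for all sufficiently large $k$; (ii) for every $0<c<1$ sufficiently close to $1$, there exists $k_0\in\mathbb{N}$ such that the function $t\mapsto t^c$ belongs to $S(f,k_0)$; (iii) the class $S(f,k)$ does not contain all functions $t\mapsto t^c$ with $c$ sufficiently close to $1$ (i.e. there is no $c_0<1$ such that $t^c\in S(f,k)$ for all $c\in(c_0,1)$).
   Context: $\mathcal{H}$ is a fixed Hardy field (subfield of germs at $+\infty$ of real functions, closed under differentiation) containing the logarithmico-exponential functions, closed under composition and compositional inversion. $f$ is strongly non-polynomial if $t^d\prec f(t)\prec t^{d+1}$ for some integer $d\ge0$, where $f\prec g$ means $f/g\to0$; $f\gg g$ means $|g(t)|\le C|f(t)|$ eventually. For $k$ large enough that $f^{(k)}(t)\to0$, $S(f,k)=\{g\in\mathcal{H}:\ |f^{(k)}(t)|^{-1/k}\preceq g(t)\prec|f^{(k+1)}(t)|^{-1/(k+1)}\}$, where $u\preceq v$ means $\lim_{t\to\infty}|v(t)/u(t)|$ is non-zero (possibly infinite). *)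

theory Defs
  imports "HOL-Analysis.Analysis"
begin

text \<open>Germs at +infinity are represented by functions real => real; all notions
below only depend on the behaviour eventually (filter at_top).\<close>

inductive_set le_functions :: "(real \<Rightarrow> real) set" where
  le_const: "(\<lambda>_. c) \<in> le_functions"
| le_ident: "(\<lambda>x. x) \<in> le_functions"
| le_add: "f \<in> le_functions \<Longrightarrow> g \<in> le_functions \<Longrightarrow> (\<lambda>x. f x + g x) \<in> le_functions"
| le_mult: "f \<in> le_functions \<Longrightarrow> g \<in> le_functions \<Longrightarrow> (\<lambda>x. f x * g x) \<in> le_functions"
| le_minus: "f \<in> le_functions \<Longrightarrow> (\<lambda>x. - f x) \<in> le_functions"
| le_inverse: "f \<in> le_functions \<Longrightarrow> eventually (\<lambda>x. f x \<noteq> 0) at_top \<Longrightarrow> (\<lambda>x. 1 / f x) \<in> le_functions"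
| le_exp: "f \<in> le_functions \<Longrightarrow> (\<lambda>x. exp (f x)) \<in> le_functions"
| le_ln: "f \<in> le_functions \<Longrightarrow> eventually (\<lambda>x. f x > 0) at_top \<Longrightarrow> (\<lambda>x. ln (f x)) \<in> le_functions"
| le_germ: "f \<in> le_functions \<Longrightarrow> eventually (\<lambda>x. f x = g x) at_top \<Longrightarrow> g \<in> le_functions"

definition hardy_field :: "(real \<Rightarrow> real) set \<Rightarrow> bool" where
  "hardy_field H \<longleftrightarrow>
     (\<forall>f g. f \<in> H \<longrightarrow> eventually (\<lambda>x. f x = g x) at_top \<longrightarrow> g \<in> H) \<and>
     (\<forall>c. (\<lambda>_. c) \<in> H) \<and>
     (\<forall>f\<in>H. \<forall>g\<in>H. (\<lambda>x. f x + g x) \<in> H \<and> (\<lambda>x. f x * g x) \<in> H) \<and>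
     (\<forall>f\<in>H. (\<lambda>x. - f x) \<in> H) \<and>
     (\<forall>f\<in>H. eventually (\<lambda>x. f x = 0) at_top \<or>
              (eventually (\<lambda>x. f x \<noteq> 0) at_top \<and> (\<lambda>x. 1 / f x) \<in> H)) \<and>
     (\<forall>f\<in>H. eventually (\<lambda>x. f differentiable (at x)) at_top \<and> deriv f \<in> H)"

definition good_hardy_field :: "(real \<Rightarrow> real) set \<Rightarrow> bool" where
  "good_hardy_field H \<longleftrightarrow>
     hardy_field H \<and> le_functions \<subseteq> H \<and>
     (\<forall>f\<in>H. \<forall>g\<in>H. filterlim g at_top at_top \<longrightarrow> (\<lambda>x. f (g x)) \<in> H) \<and>
     (\<forall>g\<in>H. filterlim g at_top at_top \<longrightarrow>
        (\<exists>h\<in>H. filterlim h at_top at_top \<and> eventually (\<lambda>x. h (g x) = x) at_top))"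

definition hderiv :: "nat \<Rightarrow> (real \<Rightarrow> real) \<Rightarrow> (real \<Rightarrow> real)" where
  "hderiv k f = (deriv ^^ k) f"

definition asym_less :: "(real \<Rightarrow> real) \<Rightarrow> (real \<Rightarrow> real) \<Rightarrow> bool" where
  "asym_less f g \<longleftrightarrow> ((\<lambda>t. f t / g t) \<longlongrightarrow> 0) at_top"

definition asym_leq :: "(real \<Rightarrow> real) \<Rightarrow> (real \<Rightarrow> real) \<Rightarrow> bool" where
  "asym_leq u v \<longleftrightarrow>
     (\<exists>L>0. ((\<lambda>t. \<bar>v t / u t\<bar>) \<longlongrightarrow> L) at_top) \<or>
     filterlim (\<lambda>t. \<bar>v t / u t\<bar>) at_top at_top"

definition asym_gg :: "(real \<Rightarrow> real) \<Rightarrow> (real \<Rightarrow> real) \<Rightarrow> bool" where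
  "asym_gg f g \<longleftrightarrow> (\<exists>C. eventually (\<lambda>t. \<bar>g t\<bar> \<le> C * \<bar>f t\<bar>) at_top)"

definition strongly_non_polynomial :: "(real \<Rightarrow> real) \<Rightarrow> bool" where
  "strongly_non_polynomial f \<longleftrightarrow>
     (\<exists>d::nat. asym_less (\<lambda>t. t ^ d) f \<and> asym_less f (\<lambda>t. t ^ (d + 1)))"

text \<open>The class S(f,k) (meaningful for k with f^(k) \<rightarrow> 0; that condition is
stated explicitly where needed).\<close>
definition S_class :: "(real \<Rightarrow> real) set \<Rightarrow> (real \<Rightarrow> real) \<Rightarrow> nat \<Rightarrow> (real \<Rightarrow> real) set" where
  "S_class H f k = {g \<in> H.
     asym_leq (\<lambda>t. \<bar>hderiv k f t\<bar> powr (- 1 / real k)) g \<and>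
     asym_less g (\<lambda>t. \<bar>hderiv (k + 1) f t\<bar> powr (- 1 / real (k + 1)))}"

end

theory Submission
  imports Defs "HOL-Library.Landau_Symbols" "HOL-Real_Asymp.Real_Asymp"
begin

(*
  In a Hardy field the logarithmic derivative t h'(t) / h(t) of an eventually nonzero h has a
  limit in [-oo, oo], so either |h| = t^(b + o(1)) for a real b, the power order of h, or h grows
  or decays faster than every power of t.  Under the hypotheses f has a power order a > 0, and
  every differentiation lowers the power order by exactly one: for a nonzero order b because
  t h'/h tends to b; for order 0 because otherwise h' would decay faster than 1/t, so h would
  converge to a nonzero constant, which l'Hopital's rule turns into f ~ c t^j, contradicting
  t^d < f < t^(d+1).  Hence |f^(k)|^(-1/k) has power order 1 - a/k, and whether t^c lies in
  S(f,k) is decided by comparing c with 1 - a/k and 1 - a/(k+1).  In the boundary case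
  c = 1 - a/(k+1) the quotient of t^c by |f^(k+1)|^(-1/(k+1)) lies in the Hardy field and so has
  a limit, which puts t^c into S(f,k) or S(f,k+1).
*)

section \<open>Hardy fields\<close>

lemma eventually_pos_or_neg_if_continuous_nonzero:
  fixes f :: "real \<Rightarrow> real"
  assumes "eventually (\<lambda>x. isCont f x \<and> f x \<noteq> 0) at_top"
  shows "eventually (\<lambda>x. f x > 0) at_top \<or> eventually (\<lambda>x. f x < 0) at_top"
proof -
  obtain T where T: "\<And>x. x \<ge> T \<Longrightarrow> isCont f x \<and> f x \<noteq> 0"
    using assms by (auto simp: eventually_at_top_linorder)
  have same_sign: "f x > 0 \<longleftrightarrow> f T > 0" if "x \<ge> T" for x
  proof (rule ccontr)
    assume "(f x > 0) \<noteq> (f T > 0)"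
    then have "f x \<le> 0 \<and> 0 \<le> f T \<or> f T \<le> 0 \<and> 0 \<le> f x" by auto
    then have "\<exists>z. T \<le> z \<and> z \<le> x \<and> f z = 0"
      using IVT[of f T 0 x] IVT2[of f x 0 T] T that by auto
    with T show False by force
  qed
  show ?thesis
  proof (cases "f T > 0")
    case True
    then show ?thesis using same_sign unfolding eventually_at_top_linorder by blast
  next
    case False
    have "f x < 0" if "x \<ge> T" for x
      using same_sign[OF that] T[OF that] False by (auto simp: less_le)
    then show ?thesis unfolding eventually_at_top_linorder by blast
  qed
qed

lemma tendsto_or_filterlim_at_top_if_mono:
  fixes h :: "real \<Rightarrow> real"
  assumes mono: "\<And>x y. T \<le> x \<Longrightarrow> x \<le> y \<Longrightarrow> h x \<le> h y"
  shows "(\<exists>L. (h \<longlongrightarrow> L) at_top) \<or> filterlim h at_top at_top"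
proof (cases "bdd_above (h ` {T..})")
  case True
  have "(h \<longlongrightarrow> Sup (h ` {T..})) at_top"
  proof (rule order_tendstoI)
    fix a assume "a < Sup (h ` {T..})"
    then obtain x0 where x0: "x0 \<ge> T" "a < h x0" using less_cSup_iff[OF _ True] by auto
    have "a < h x" if "x \<ge> x0" for x
      using mono[OF x0(1) that] x0(2) by linarith
    then show "eventually (\<lambda>x. a < h x) at_top"
      unfolding eventually_at_top_linorder by blast
  next
    fix a assume "Sup (h ` {T..}) < a"
    moreover have "h x \<le> Sup (h ` {T..})" if "x \<ge> T" for x
      using True that by (auto intro: cSup_upper)
    ultimately show "eventually (\<lambda>x. h x < a) at_top"
      unfolding eventually_at_top_linorder by force
  qed
  then show ?thesis by blast
next
  case False
  have "eventually (\<lambda>x. Z \<le> h x) at_top" for Z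
  proof -
    obtain x0 where x0: "x0 \<ge> T" "h x0 > Z" using False by (auto simp: bdd_above_def not_le)
    have "Z \<le> h x" if "x \<ge> x0" for x
      using mono[OF x0(1) that] x0(2) by linarith
    then show ?thesis unfolding eventually_at_top_linorder by blast
  qed
  then show ?thesis unfolding filterlim_at_top by blast
qed

lemma tendsto_or_filterlim_at_top_if_deriv_nonneg:
  fixes f f' :: "real \<Rightarrow> real"
  assumes "eventually (\<lambda>x. (f has_real_derivative f' x) (at x) \<and> f' x \<ge> 0) at_top"
  shows "(\<exists>L. (f \<longlongrightarrow> L) at_top) \<or> filterlim f at_top at_top"
proof -
  obtain T where T: "\<And>x. x \<ge> T \<Longrightarrow> (f has_real_derivative f' x) (at x) \<and> f' x \<ge> 0"
    using assms by (auto simp: eventually_at_top_linorder)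
  have "f x \<le> f y" if "T \<le> x" "x \<le> y" for x y
  proof (rule DERIV_nonneg_imp_nondecreasing[OF that(2)])
    fix z assume "x \<le> z" "z \<le> y"
    then show "\<exists>d. (f has_real_derivative d) (at z) \<and> d \<ge> 0" using T[of z] that(1) by auto
  qed
  then show ?thesis by (rule tendsto_or_filterlim_at_top_if_mono)
qed

context
  fixes H :: "(real \<Rightarrow> real) set"
  assumes H: "hardy_field H"
begin

lemma hardy_field_cong: "f \<in> H \<Longrightarrow> eventually (\<lambda>x. f x = g x) at_top \<Longrightarrow> g \<in> H"
  using H unfolding hardy_field_def by blast

lemma hardy_field_mult: "f \<in> H \<Longrightarrow> g \<in> H \<Longrightarrow> (\<lambda>x. f x * g x) \<in> H"
  using H unfolding hardy_field_def by blast

lemma hardy_field_eventually_zero_or_nonzero: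
  "f \<in> H \<Longrightarrow> eventually (\<lambda>x. f x = 0) at_top \<or> eventually (\<lambda>x. f x \<noteq> 0) at_top"
  using H unfolding hardy_field_def by blast

lemma hardy_field_inverse:
  assumes "f \<in> H" "eventually (\<lambda>x. f x \<noteq> 0) at_top"
  shows "(\<lambda>x. 1 / f x) \<in> H"
proof -
  have "\<not> eventually (\<lambda>x. f x = 0) at_top"
  proof
    assume "eventually (\<lambda>x. f x = 0) at_top"
    from eventually_conj[OF assms(2) this] show False by simp
  qed
  then show ?thesis using assms(1) H unfolding hardy_field_def by blast
qed

lemma hardy_field_divide:
  "f \<in> H \<Longrightarrow> g \<in> H \<Longrightarrow> eventually (\<lambda>x. g x \<noteq> 0) at_top \<Longrightarrow> (\<lambda>x. f x / g x) \<in> H"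
  using hardy_field_mult[of f "\<lambda>x. 1 / g x"] hardy_field_inverse[of g] by simp

lemma hardy_field_deriv: "f \<in> H \<Longrightarrow> deriv f \<in> H"
  using H unfolding hardy_field_def by blast

lemma hardy_field_hderiv: "f \<in> H \<Longrightarrow> hderiv k f \<in> H"
  by (induction k) (simp_all add: hderiv_def hardy_field_deriv)

lemma hardy_field_has_real_derivative:
  "f \<in> H \<Longrightarrow> eventually (\<lambda>x. (f has_real_derivative deriv f x) (at x)) at_top"
  using H unfolding hardy_field_def
  by (auto elim!: eventually_mono simp: DERIV_deriv_iff_real_differentiable)

lemma hardy_field_has_real_derivative_hderiv:
  "f \<in> H \<Longrightarrow> eventually (\<lambda>x. (hderiv k f has_real_derivative hderiv (Suc k) f x) (at x)) at_top"
  using hardy_field_has_real_derivative[OF hardy_field_hderiv] by (simp add: hderiv_def)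

lemma hardy_field_eventually_nonneg_or_nonpos:
  assumes "f \<in> H"
  shows "eventually (\<lambda>x. f x \<ge> 0) at_top \<or> eventually (\<lambda>x. f x \<le> 0) at_top"
  using hardy_field_eventually_zero_or_nonzero[OF assms]
proof
  assume "eventually (\<lambda>x. f x = 0) at_top"
  then show ?thesis by (auto elim: eventually_mono)
next
  assume "eventually (\<lambda>x. f x \<noteq> 0) at_top"
  moreover have "eventually (\<lambda>x. isCont f x) at_top"
    using hardy_field_has_real_derivative[OF assms] by (auto elim!: eventually_mono intro: DERIV_isCont)
  ultimately have "eventually (\<lambda>x. f x > 0) at_top \<or> eventually (\<lambda>x. f x < 0) at_top"
    by (intro eventually_pos_or_neg_if_continuous_nonzero) (simp add: eventually_conj_iff)
  then show ?thesis
  proof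
    assume "eventually (\<lambda>x. f x > 0) at_top"
    then have "eventually (\<lambda>x. f x \<ge> 0) at_top" by (rule eventually_mono) simp
    then show ?thesis ..
  next
    assume "eventually (\<lambda>x. f x < 0) at_top"
    then have "eventually (\<lambda>x. f x \<le> 0) at_top" by (rule eventually_mono) simp
    then show ?thesis ..
  qed
qed

lemma hardy_field_limit_trichotomy:
  assumes "f \<in> H"
  shows "(\<exists>L. (f \<longlongrightarrow> L) at_top) \<or> filterlim f at_top at_top \<or> filterlim f at_bot at_top"
proof -
  note D = hardy_field_has_real_derivative[OF assms]
  from hardy_field_eventually_nonneg_or_nonpos[OF hardy_field_deriv[OF assms]]
  show ?thesis
  proof
    assume "eventually (\<lambda>x. deriv f x \<ge> 0) at_top"
    with D have "eventually (\<lambda>x. (f has_real_derivative deriv f x) (at x) \<and> deriv f x \<ge> 0) at_top"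
      by (rule eventually_conj)
    then show ?thesis using tendsto_or_filterlim_at_top_if_deriv_nonneg by blast
  next
    assume "eventually (\<lambda>x. deriv f x \<le> 0) at_top"
    with D have "eventually (\<lambda>x. ((\<lambda>x. - f x) has_real_derivative - deriv f x) (at x) \<and> - deriv f x \<ge> 0) at_top"
      by eventually_elim (auto intro: DERIV_minus)
    then have "(\<exists>L. ((\<lambda>x. - f x) \<longlongrightarrow> L) at_top) \<or> filterlim (\<lambda>x. - f x) at_top at_top"
      by (rule tendsto_or_filterlim_at_top_if_deriv_nonneg)
    then show ?thesis
    proof
      assume "\<exists>L. ((\<lambda>x. - f x) \<longlongrightarrow> L) at_top"
      then obtain L where "((\<lambda>x. - f x) \<longlongrightarrow> L) at_top" ..
      then have "(f \<longlongrightarrow> - L) at_top" using tendsto_minus by fastforce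
      then show ?thesis by blast
    next
      assume "filterlim (\<lambda>x. - f x) at_top at_top"
      from filterlim_uminus_at_top[THEN iffD1, OF this] have "filterlim f at_bot at_top" by simp
      then show ?thesis by blast
    qed
  qed
qed

lemma hardy_field_tendsto_if_bounded:
  assumes "f \<in> H" and bounded: "eventually (\<lambda>x. \<bar>f x\<bar> \<le> B) at_top"
  shows "\<exists>c. (f \<longlongrightarrow> c) at_top"
  using hardy_field_limit_trichotomy[OF assms(1)]
proof (elim disjE)
  assume "filterlim f at_top at_top"
  then have "eventually (\<lambda>x. B + 1 \<le> f x) at_top" unfolding filterlim_at_top by blast
  then obtain x where "B + 1 \<le> f x" "\<bar>f x\<bar> \<le> B"
    using eventually_happens'[OF trivial_limit_at_top_linorder eventually_conj[OF _ bounded]] by blast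
  then show ?thesis by (simp add: abs_le_iff)
next
  assume "filterlim f at_bot at_top"
  then have "eventually (\<lambda>x. f x \<le> - B - 1) at_top" unfolding filterlim_at_bot by blast
  then obtain x where "f x \<le> - B - 1" "\<bar>f x\<bar> \<le> B"
    using eventually_happens'[OF trivial_limit_at_top_linorder eventually_conj[OF _ bounded]] by blast
  then show ?thesis by (simp add: abs_le_iff)
qed

lemma hardy_field_deriv_eventually_nonzero:
  assumes "f \<in> H" "eventually (\<lambda>x. f x \<noteq> 0) at_top"
    and no_limit: "\<And>c. c \<noteq> 0 \<Longrightarrow> \<not> (f \<longlongrightarrow> c) at_top"
  shows "eventually (\<lambda>x. deriv f x \<noteq> 0) at_top"
  using hardy_field_eventually_zero_or_nonzero[OF hardy_field_deriv[OF assms(1)]]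
proof
  assume "eventually (\<lambda>x. deriv f x = 0) at_top"
  with hardy_field_has_real_derivative[OF assms(1)]
  have "eventually (\<lambda>x. (f has_real_derivative 0) (at x)) at_top"
    by eventually_elim simp
  then obtain T where T: "\<And>x. x \<ge> T \<Longrightarrow> (f has_real_derivative 0) (at x)"
    unfolding eventually_at_top_linorder by blast
  have "\<exists>c. \<forall>x\<in>{T..}. f x = c"
    by (rule has_field_derivative_zero_constant) (auto intro: has_field_derivative_at_within T)
  then obtain c where "eventually (\<lambda>x. f x = c) at_top"
    unfolding eventually_at_top_linorder by auto
  moreover from this assms(2) have "c \<noteq> 0"
    using eventually_happens'[OF trivial_limit_at_top_linorder eventually_conj] by fastforce
  ultimately have False
    using no_limit tendsto_eventually by blast
  then show ?thesis ..
qed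

end

section \<open>Power orders\<close>

(* |h t| = t powr (b + o(1)).  As ln 0 = 0, zeros of h are not excluded; lemmas that need
   this assume h eventually nonzero. *)
definition power_order :: "(real \<Rightarrow> real) \<Rightarrow> real \<Rightarrow> bool" where
  "power_order h b \<longleftrightarrow> (\<lambda>t. ln \<bar>h t\<bar> - b * ln t) \<in> o(ln)"

lemma power_order_iff:
  "power_order h b \<longleftrightarrow>
     (\<forall>e>0. eventually (\<lambda>t. (b - e) * ln t \<le> ln \<bar>h t\<bar> \<and> ln \<bar>h t\<bar> \<le> (b + e) * ln t) at_top)"
proof
  assume "power_order h b"
  show "\<forall>e>0. eventually (\<lambda>t. (b - e) * ln t \<le> ln \<bar>h t\<bar> \<and> ln \<bar>h t\<bar> \<le> (b + e) * ln t) at_top"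
  proof (intro allI impI)
    fix e :: real assume "e > 0"
    from landau_o.smallD[OF \<open>power_order h b\<close>[unfolded power_order_def] this] eventually_gt_at_top[of "1::real"]
    show "eventually (\<lambda>t. (b - e) * ln t \<le> ln \<bar>h t\<bar> \<and> ln \<bar>h t\<bar> \<le> (b + e) * ln t) at_top"
      by eventually_elim (auto simp: abs_le_iff algebra_simps)
  qed
next
  assume bounds: "\<forall>e>0. eventually (\<lambda>t. (b - e) * ln t \<le> ln \<bar>h t\<bar> \<and> ln \<bar>h t\<bar> \<le> (b + e) * ln t) at_top"
  show "power_order h b"
    unfolding power_order_def
  proof (rule landau_o.smallI)
    fix e :: real assume "e > 0"
    from bounds[rule_format, OF this] eventually_gt_at_top[of "1::real"]
    show "eventually (\<lambda>t. norm (ln \<bar>h t\<bar> - b * ln t) \<le> e * norm (ln t)) at_top"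
      by eventually_elim (auto simp: abs_le_iff algebra_simps)
  qed
qed

lemma power_orderD:
  "power_order h b \<Longrightarrow> e > 0 \<Longrightarrow>
     eventually (\<lambda>t. (b - e) * ln t \<le> ln \<bar>h t\<bar> \<and> ln \<bar>h t\<bar> \<le> (b + e) * ln t) at_top"
  unfolding power_order_iff by blast

lemma eventually_mult_ln_bounds_le:
  fixes g :: "real \<Rightarrow> real"
  assumes "eventually (\<lambda>t. \<beta>\<^sub>1 * ln t \<le> g t) at_top" "eventually (\<lambda>t. g t \<le> \<beta>\<^sub>2 * ln t) at_top"
  shows "\<beta>\<^sub>1 \<le> \<beta>\<^sub>2"
proof -
  obtain t where "\<beta>\<^sub>1 * ln t \<le> g t" "g t \<le> \<beta>\<^sub>2 * ln t" "t > 1"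
    using eventually_happens'[OF _ eventually_conj[OF eventually_conj[OF assms] eventually_gt_at_top[of "1::real"]]]
    by auto
  then have "\<beta>\<^sub>1 * ln t \<le> \<beta>\<^sub>2 * ln t" by linarith
  moreover have "ln t > 0" using \<open>t > 1\<close> by simp
  ultimately show ?thesis by (simp add: mult_le_cancel_right)
qed

lemma power_order_le_if_ln_abs_le:
  assumes "power_order h b" "eventually (\<lambda>t. ln \<bar>h t\<bar> \<le> \<beta> * ln t) at_top"
  shows "b \<le> \<beta>"
proof (rule field_le_epsilon)
  fix e :: real assume "e > 0"
  from power_orderD[OF assms(1) this]
  have "eventually (\<lambda>t. (b - e) * ln t \<le> ln \<bar>h t\<bar>) at_top" by (auto elim: eventually_mono)
  from eventually_mult_ln_bounds_le[OF this assms(2)] show "b \<le> \<beta> + e" by simp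
qed

lemma power_order_ge_if_ln_abs_ge:
  assumes "power_order h b" "eventually (\<lambda>t. \<beta> * ln t \<le> ln \<bar>h t\<bar>) at_top"
  shows "\<beta> \<le> b"
proof (rule field_le_epsilon)
  fix e :: real assume "e > 0"
  from power_orderD[OF assms(1) this]
  have "eventually (\<lambda>t. ln \<bar>h t\<bar> \<le> (b + e) * ln t) at_top" by (auto elim: eventually_mono)
  from eventually_mult_ln_bounds_le[OF assms(2) this] show "\<beta> \<le> b + e" .
qed

lemma power_order_unique:
  assumes "power_order h b" "power_order h b'"
  shows "b = b'"
proof -
  have le: "c \<le> c'" if "power_order h c" "power_order h c'" for c c'
  proof (rule field_le_epsilon)
    fix e :: real assume "e > 0"
    from power_orderD[OF that(2) this]
    have "eventually (\<lambda>t. ln \<bar>h t\<bar> \<le> (c' + e) * ln t) at_top" by (auto elim: eventually_mono)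
    with that(1) show "c \<le> c' + e" by (rule power_order_le_if_ln_abs_le)
  qed
  from le[OF assms] le[OF assms(2,1)] show ?thesis by simp
qed

lemma power_order_cong:
  assumes "eventually (\<lambda>t. h\<^sub>1 t = h\<^sub>2 t) at_top" "power_order h\<^sub>1 b"
  shows "power_order h\<^sub>2 b"
proof -
  from assms(1) have "eventually (\<lambda>t. (ln \<bar>h\<^sub>1 t\<bar> - b * ln t) = (ln \<bar>h\<^sub>2 t\<bar> - b * ln t)) at_top"
    by eventually_elim simp
  with assms(2) show ?thesis
    unfolding power_order_def by (rule landau_o.small.in_cong[THEN iffD1, rotated])
qed

lemma power_order_mult:
  assumes "power_order h\<^sub>1 b\<^sub>1" "power_order h\<^sub>2 b\<^sub>2"
    and "eventually (\<lambda>t. h\<^sub>1 t \<noteq> 0) at_top" "eventually (\<lambda>t. h\<^sub>2 t \<noteq> 0) at_top"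
  shows "power_order (\<lambda>t. h\<^sub>1 t * h\<^sub>2 t) (b\<^sub>1 + b\<^sub>2)"
proof -
  from assms(3,4) have "eventually (\<lambda>t. (ln \<bar>h\<^sub>1 t\<bar> - b\<^sub>1 * ln t) + (ln \<bar>h\<^sub>2 t\<bar> - b\<^sub>2 * ln t)
      = (ln \<bar>h\<^sub>1 t * h\<^sub>2 t\<bar> - (b\<^sub>1 + b\<^sub>2) * ln t)) at_top"
    by eventually_elim (simp add: abs_mult ln_mult algebra_simps)
  with sum_in_smallo(1)[OF assms(1,2)[unfolded power_order_def]] show ?thesis
    unfolding power_order_def by (rule landau_o.small.in_cong[THEN iffD1, rotated])
qed

lemma power_order_divide:
  assumes "power_order h\<^sub>1 b\<^sub>1" "power_order h\<^sub>2 b\<^sub>2"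
    and "eventually (\<lambda>t. h\<^sub>1 t \<noteq> 0) at_top" "eventually (\<lambda>t. h\<^sub>2 t \<noteq> 0) at_top"
  shows "power_order (\<lambda>t. h\<^sub>1 t / h\<^sub>2 t) (b\<^sub>1 - b\<^sub>2)"
proof -
  from assms(3,4) have "eventually (\<lambda>t. (ln \<bar>h\<^sub>1 t\<bar> - b\<^sub>1 * ln t) - (ln \<bar>h\<^sub>2 t\<bar> - b\<^sub>2 * ln t)
      = (ln \<bar>h\<^sub>1 t / h\<^sub>2 t\<bar> - (b\<^sub>1 - b\<^sub>2) * ln t)) at_top"
    by eventually_elim (simp add: ln_div algebra_simps)
  with sum_in_smallo(2)[OF assms(1,2)[unfolded power_order_def]] show ?thesis
    unfolding power_order_def by (rule landau_o.small.in_cong[THEN iffD1, rotated])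
qed

lemma power_order_abs_powr:
  assumes "power_order h b"
  shows "power_order (\<lambda>t. \<bar>h t\<bar> powr r) (r * b)"
proof -
  have "(\<lambda>t. r * (ln \<bar>h t\<bar> - b * ln t)) \<in> o(ln)"
    using assms unfolding power_order_def by (cases "r = 0") simp_all
  then show ?thesis
    unfolding power_order_def by (simp add: algebra_simps)
qed

lemma power_order_powr: "power_order (\<lambda>t. t powr c) c"
proof -
  have "eventually (\<lambda>t. 0 = ln \<bar>t powr c\<bar> - c * ln t) at_top"
    using eventually_gt_at_top[of "0::real"] by eventually_elim simp
  with zero_in_smallo show ?thesis
    unfolding power_order_def by (rule landau_o.small.in_cong[THEN iffD1, rotated])
qed

lemma power_order_ident: "power_order (\<lambda>t. t) 1"
proof -
  have "eventually (\<lambda>t::real. t powr 1 = t) at_top"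
    using eventually_gt_at_top[of "0::real"] by eventually_elim simp
  then show ?thesis by (rule power_order_cong[OF _ power_order_powr])
qed

lemma power_order_if_tendsto_nonzero:
  assumes "(h \<longlongrightarrow> L) at_top" "L \<noteq> 0"
  shows "power_order h 0"
proof -
  have "((\<lambda>t. ln \<bar>h t\<bar> / 1) \<longlongrightarrow> ln \<bar>L\<bar>) at_top"
    using assms by (auto intro!: tendsto_intros)
  then have "(\<lambda>t. ln \<bar>h t\<bar>) \<in> O(\<lambda>_. 1)" by (rule bigoI_tendsto) simp
  moreover have "(\<lambda>_. 1 :: real) \<in> o(\<lambda>t. ln t)" by real_asymp
  ultimately show ?thesis
    unfolding power_order_def by (simp add: landau_o.big_small_trans)
qed

lemma abs_le_powr_if_ln_abs_le:
  fixes x t :: real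
  assumes "t > 0" "ln \<bar>x\<bar> \<le> \<beta> * ln t"
  shows "\<bar>x\<bar> \<le> t powr \<beta>"
proof (cases "x = 0")
  case False
  with assms show ?thesis by (subst ln_le_cancel_iff[symmetric]) auto
qed simp

lemma powr_le_abs_if_ln_abs_ge:
  fixes x t :: real
  assumes "t > 0" "x \<noteq> 0" "\<beta> * ln t \<le> ln \<bar>x\<bar>"
  shows "t powr \<beta> \<le> \<bar>x\<bar>"
  using assms by (subst ln_le_cancel_iff[symmetric]) auto

lemma power_order_tendsto_zero:
  assumes "power_order h b" "b < 0"
  shows "(h \<longlongrightarrow> 0) at_top"
proof -
  have "- b / 2 > 0" using assms(2) by simp
  from power_orderD[OF assms(1) this] eventually_gt_at_top[of "0::real"]
  have "eventually (\<lambda>t. \<bar>h t\<bar> \<le> t powr (b / 2)) at_top"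
  proof eventually_elim
    case (elim t)
    have "b + - b / 2 = b / 2" by simp
    with elim have "ln \<bar>h t\<bar> \<le> b / 2 * ln t" by metis
    with \<open>t > 0\<close> show ?case by (rule abs_le_powr_if_ln_abs_le)
  qed
  moreover have "((\<lambda>t. t powr (b / 2)) \<longlongrightarrow> 0) at_top" using assms(2) by real_asymp
  ultimately have "((\<lambda>t. \<bar>h t\<bar>) \<longlongrightarrow> 0) at_top"
    using tendsto_sandwich[of "\<lambda>_. 0" "\<lambda>t. \<bar>h t\<bar>" at_top "\<lambda>t. t powr (b / 2)" 0] by simp
  then show ?thesis by (simp add: tendsto_rabs_zero_iff)
qed

lemma power_order_filterlim_abs_at_top:
  assumes "power_order h b" "b > 0"
  shows "filterlim (\<lambda>t. \<bar>h t\<bar>) at_top at_top"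
proof -
  have "b / 2 > 0" using assms(2) by simp
  from power_orderD[OF assms(1) this] eventually_gt_at_top[of "1::real"]
  have "eventually (\<lambda>t. t powr (b / 2) \<le> \<bar>h t\<bar>) at_top"
  proof eventually_elim
    case (elim t)
    have "b - b / 2 = b / 2" by simp
    with elim have ge: "b / 2 * ln t \<le> ln \<bar>h t\<bar>" by metis
    moreover have "b / 2 * ln t > 0" using elim \<open>b / 2 > 0\<close> by simp
    ultimately have "h t \<noteq> 0" by auto
    then show ?case using powr_le_abs_if_ln_abs_ge[of t "h t" "b / 2"] elim(2) ge by simp
  qed
  moreover have "filterlim (\<lambda>t. t powr (b / 2)) at_top at_top" using assms(2) by real_asymp
  ultimately show ?thesis by (rule filterlim_at_top_mono[rotated])
qed

lemma power_order_nonpos_if_tendsto_zero: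
  assumes "power_order h b" "(h \<longlongrightarrow> 0) at_top"
  shows "b \<le> 0"
proof -
  have "eventually (\<lambda>t. \<bar>h t\<bar> < 1) at_top"
    using order_tendstoD(2)[OF tendsto_rabs[OF assms(2)]] by simp
  then have "eventually (\<lambda>t. ln \<bar>h t\<bar> \<le> 0 * ln t) at_top"
  proof (rule eventually_mono)
    fix t assume "\<bar>h t\<bar> < 1"
    then show "ln \<bar>h t\<bar> \<le> 0 * ln t" by (cases "h t = 0") simp_all
  qed
  with assms(1) show ?thesis by (rule power_order_le_if_ln_abs_le)
qed

section \<open>Logarithmic derivatives\<close>

lemma has_real_derivative_ln_abs:
  assumes "h x \<noteq> 0" "(h has_real_derivative d) (at x)"
  shows "((\<lambda>y. ln \<bar>h y\<bar>) has_real_derivative d / h x) (at x)"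
proof -
  have "(\<lambda>y. ln \<bar>h y\<bar>) = (\<lambda>y. ln (h y * h y) / 2)"
    by (simp add: fun_eq_iff ln_mult abs_if ln_minus)
  moreover have "h x * h x > 0" using assms(1) by (metis not_real_square_gt_zero)
  then have "((\<lambda>y. ln (h y * h y) / 2) has_real_derivative
      inverse (h x * h x) * (d * h x + d * h x) / 2) (at x)"
    by (intro DERIV_cdivide DERIV_chain2[OF DERIV_ln] DERIV_mult assms(2))
  moreover have "inverse (h x * h x) * (d * h x + d * h x) / 2 = d / h x"
    using assms(1) by (simp add: field_simps)
  ultimately show ?thesis by simp
qed

lemma eventually_le_mult_ln:
  fixes C e :: real
  assumes "e > 0"
  shows "eventually (\<lambda>t. C \<le> e * ln t) at_top"
  using assms by real_asymp

lemma eventually_ln_abs_le_if_log_deriv_le: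
  fixes h h' :: "real \<Rightarrow> real"
  assumes D: "eventually (\<lambda>t. h t \<noteq> 0 \<and> (h has_real_derivative h' t) (at t)) at_top"
    and le: "eventually (\<lambda>t. t * h' t / h t \<le> \<beta>) at_top" and "\<beta> < \<beta>'"
  shows "eventually (\<lambda>t. ln \<bar>h t\<bar> \<le> \<beta>' * ln t) at_top"
proof -
  obtain T where T: "\<And>t. t \<ge> T \<Longrightarrow> (h t \<noteq> 0 \<and> (h has_real_derivative h' t) (at t))
      \<and> t * h' t / h t \<le> \<beta> \<and> t > 0"
    using eventually_conj[OF D eventually_conj[OF le eventually_gt_at_top[of "0::real"]]]
    unfolding eventually_at_top_linorder by blast
  have decreasing: "ln \<bar>h t\<bar> - \<beta> * ln t \<le> ln \<bar>h T\<bar> - \<beta> * ln T" if "t \<ge> T" for t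
  proof (rule DERIV_nonpos_imp_nonincreasing[OF that])
    fix z assume "T \<le> z" "z \<le> t"
    then have z: "h z \<noteq> 0" "(h has_real_derivative h' z) (at z)" "z * h' z / h z \<le> \<beta>" "z > 0"
      using T by auto
    have "((\<lambda>t. ln \<bar>h t\<bar> - \<beta> * ln t) has_real_derivative h' z / h z - \<beta> * inverse z) (at z)"
      by (intro DERIV_diff DERIV_cmult has_real_derivative_ln_abs z DERIV_ln)
    moreover have "h' z / h z \<le> \<beta> * inverse z"
      using z by (simp add: pos_le_divide_eq mult.commute divide_inverse[symmetric])
    ultimately show "\<exists>d. ((\<lambda>t. ln \<bar>h t\<bar> - \<beta> * ln t) has_real_derivative d) (at z) \<and> d \<le> 0"
      by (intro exI[of _ "h' z / h z - \<beta> * inverse z"]) simp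
  qed
  have "eventually (\<lambda>t. ln \<bar>h T\<bar> - \<beta> * ln T \<le> (\<beta>' - \<beta>) * ln t) at_top"
    using \<open>\<beta> < \<beta>'\<close> by (intro eventually_le_mult_ln) simp
  with eventually_ge_at_top[of T] show ?thesis
  proof eventually_elim
    case (elim t)
    have "(\<beta>' - \<beta>) * ln t = \<beta>' * ln t - \<beta> * ln t" by (simp add: left_diff_distrib)
    with decreasing[OF elim(1)] elim(2) show ?case by linarith
  qed
qed

lemma eventually_ln_abs_ge_if_log_deriv_ge:
  fixes h h' :: "real \<Rightarrow> real"
  assumes D: "eventually (\<lambda>t. h t \<noteq> 0 \<and> (h has_real_derivative h' t) (at t)) at_top"
    and ge: "eventually (\<lambda>t. \<beta> \<le> t * h' t / h t) at_top" and "\<beta>' < \<beta>"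
  shows "eventually (\<lambda>t. \<beta>' * ln t \<le> ln \<bar>h t\<bar>) at_top"
proof -
  from D have D_inverse: "eventually (\<lambda>t. 1 / h t \<noteq> 0
      \<and> ((\<lambda>t. 1 / h t) has_real_derivative - h' t / (h t * h t)) (at t)) at_top"
    by eventually_elim (auto intro!: derivative_eq_intros simp: field_simps)
  from D ge have le_inverse: "eventually (\<lambda>t. t * (- h' t / (h t * h t)) / (1 / h t) \<le> - \<beta>) at_top"
    by eventually_elim (simp add: field_simps)
  have "- \<beta> < - \<beta>'" using \<open>\<beta>' < \<beta>\<close> by simp
  from eventually_ln_abs_le_if_log_deriv_le[OF D_inverse le_inverse this]
  have "eventually (\<lambda>t. ln \<bar>1 / h t\<bar> \<le> - \<beta>' * ln t) at_top" .
  with D show ?thesis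
    by eventually_elim (simp add: ln_div)
qed

lemma power_order_if_log_deriv_tendsto:
  fixes h h' :: "real \<Rightarrow> real"
  assumes D: "eventually (\<lambda>t. h t \<noteq> 0 \<and> (h has_real_derivative h' t) (at t)) at_top"
    and lim: "((\<lambda>t. t * h' t / h t) \<longlongrightarrow> L) at_top"
  shows "power_order h L"
  unfolding power_order_iff
proof (intro allI impI)
  fix e :: real assume "e > 0"
  have "eventually (\<lambda>t. L - e / 2 \<le> t * h' t / h t) at_top"
    using order_tendstoD(1)[OF lim, of "L - e / 2"] \<open>e > 0\<close> by (auto elim: eventually_mono)
  from eventually_ln_abs_ge_if_log_deriv_ge[OF D this]
  have lower: "eventually (\<lambda>t. (L - e) * ln t \<le> ln \<bar>h t\<bar>) at_top" using \<open>e > 0\<close> by simp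
  have "eventually (\<lambda>t. t * h' t / h t \<le> L + e / 2) at_top"
    using order_tendstoD(2)[OF lim, of "L + e / 2"] \<open>e > 0\<close> by (auto elim: eventually_mono)
  from eventually_ln_abs_le_if_log_deriv_le[OF D this]
  have upper: "eventually (\<lambda>t. ln \<bar>h t\<bar> \<le> (L + e) * ln t) at_top" using \<open>e > 0\<close> by simp
  from lower upper show "eventually (\<lambda>t. (L - e) * ln t \<le> ln \<bar>h t\<bar> \<and> ln \<bar>h t\<bar> \<le> (L + e) * ln t) at_top"
    by (rule eventually_conj)
qed

lemma eventually_ln_abs_deriv_le_if_log_deriv_tendsto_zero:
  fixes h h' :: "real \<Rightarrow> real"
  assumes lim: "((\<lambda>t. t * h' t / h t) \<longlongrightarrow> 0) at_top" and "power_order h b"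
    and "eventually (\<lambda>t. h t \<noteq> 0) at_top" "eventually (\<lambda>t. h' t \<noteq> 0) at_top" "e > 0"
  shows "eventually (\<lambda>t. ln \<bar>h' t\<bar> \<le> (b + e - 1) * ln t) at_top"
proof -
  have "eventually (\<lambda>t. \<bar>t * h' t / h t\<bar> < 1) at_top"
    using order_tendstoD(2)[OF tendsto_rabs[OF lim]] by simp
  with power_orderD[OF assms(2,5)] assms(3,4) eventually_gt_at_top[of "0::real"] show ?thesis
  proof eventually_elim
    case (elim t)
    have "ln \<bar>h' t\<bar> = ln \<bar>t * h' t / h t\<bar> + ln \<bar>h t\<bar> - ln t"
      using elim by (simp add: ln_div ln_mult abs_mult)
    moreover have "ln \<bar>t * h' t / h t\<bar> \<le> 0"
      using elim by simp
    ultimately show ?case using elim(1) by (simp add: algebra_simps)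
  qed
qed

section \<open>Derivatives of strongly non-polynomial functions\<close>

lemma tendsto_div_power_if_hderiv_tendsto:
  fixes f :: "real \<Rightarrow> real"
  assumes D: "\<And>i. eventually (\<lambda>t. (hderiv i f has_real_derivative hderiv (Suc i) f t) (at t)) at_top"
    and lim: "(hderiv j f \<longlongrightarrow> c) at_top"
  shows "((\<lambda>t. f t / (t ^ j / fact j)) \<longlongrightarrow> c) at_top"
proof -
  have "((\<lambda>t. hderiv (j - i) f t / (t ^ i / fact i)) \<longlongrightarrow> c) at_top" if "i \<le> j" for i
    using that
  proof (induction i)
    case 0
    then show ?case using lim by simp
  next
    case (Suc i)
    have "filterlim (\<lambda>t::real. t ^ Suc i) at_top at_top"
      by (intro filterlim_pow_at_top filterlim_ident) simp
    then have "filterlim (\<lambda>t::real. (1 / fact (Suc i)) * t ^ Suc i) at_top at_top"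
      by (intro filterlim_tendsto_pos_mult_at_top[OF tendsto_const]) auto
    then have "filterlim (\<lambda>t::real. t ^ Suc i / fact (Suc i)) at_top at_top" by simp
    show ?case
    proof (rule lhospital_at_top_at_top[where f' = "hderiv (j - i) f" and g' = "\<lambda>t. t ^ i / fact i"])
      show "filterlim (\<lambda>t::real. t ^ Suc i / fact (Suc i)) at_top at_top" by fact
      show "eventually (\<lambda>t::real. t ^ i / fact i \<noteq> 0) at_top"
        using eventually_gt_at_top[of "0::real"] by eventually_elim simp
      have "Suc (j - Suc i) = j - i" using Suc.prems by simp
      then show "eventually (\<lambda>t. (hderiv (j - Suc i) f has_real_derivative hderiv (j - i) f t) (at t)) at_top"
        using D[of "j - Suc i"] by simp
      have "((\<lambda>t. t ^ Suc i / fact (Suc i)) has_real_derivative t ^ i / fact i) (at t)" for t :: real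
      proof -
        have "((\<lambda>t. t ^ Suc i / fact (Suc i)) has_real_derivative
            real (Suc i) * t ^ (Suc i - Suc 0) / fact (Suc i)) (at t)"
          by (intro DERIV_cdivide DERIV_pow)
        moreover have "real (Suc i) * t ^ (Suc i - Suc 0) / fact (Suc i) = t ^ i / fact i"
          by (simp add: fact_Suc field_simps del: of_nat_Suc)
        ultimately show ?thesis by simp
      qed
      then show "eventually (\<lambda>t. ((\<lambda>t. t ^ Suc i / fact (Suc i)) has_real_derivative t ^ i / fact i) (at t)) at_top"
        by simp
      show "((\<lambda>t. hderiv (j - i) f t / (t ^ i / fact i)) \<longlongrightarrow> c) at_top"
        using Suc by simp
    qed
  qed
  from this[of j] show ?thesis by (simp add: hderiv_def)
qed

lemma power_smallo_power_iff: "(\<lambda>t::real. t ^ m) \<in> o(\<lambda>t. t ^ n) \<longleftrightarrow> m < n"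
proof -
  have powr_eq: "eventually (\<lambda>t::real. t ^ k = t powr real k) at_top" for k
    using eventually_gt_at_top[of "0::real"] by eventually_elim (simp add: powr_realpow)
  have "(\<lambda>t::real. t ^ m) \<in> o(\<lambda>t. t ^ n) \<longleftrightarrow> (\<lambda>t::real. t powr real m) \<in> o(\<lambda>t. t ^ n)"
    using landau_o.small.in_cong[OF powr_eq[of m]] by simp
  also have "\<dots> \<longleftrightarrow> (\<lambda>t::real. t powr real m) \<in> o(\<lambda>t. t powr real n)"
    using landau_o.small.cong[OF powr_eq[of n]] by simp
  also have "\<dots> \<longleftrightarrow> m < n"
    using powr_smallo_iff[OF filterlim_ident] by simp
  finally show ?thesis .
qed

lemma strongly_non_polynomial_not_bigtheta_power:
  assumes "strongly_non_polynomial f"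
  shows "f \<notin> \<Theta>(\<lambda>t. t ^ j)"
proof
  assume theta: "f \<in> \<Theta>(\<lambda>t. t ^ j)"
  from assms obtain d where d: "asym_less (\<lambda>t. t ^ d) f" "asym_less f (\<lambda>t. t ^ (d + 1))"
    unfolding strongly_non_polynomial_def by blast
  have power_nz: "eventually (\<lambda>t::real. t ^ k \<noteq> 0) at_top" for k
    using eventually_gt_at_top[of "0::real"] by eventually_elim simp
  then have "eventually (\<lambda>t. f t \<noteq> 0) at_top"
    using eventually_nonzero_bigtheta[OF theta] by blast
  with d(1) have "(\<lambda>t. t ^ d) \<in> o(f)"
    unfolding asym_less_def by (rule smalloI_tendsto)
  then have "d < j"
    unfolding landau_o.small.cong_bigtheta[OF theta] power_smallo_power_iff .
  from d(2) power_nz have "f \<in> o(\<lambda>t. t ^ (d + 1))"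
    unfolding asym_less_def by (rule smalloI_tendsto)
  then have "j < d + 1"
    unfolding landau_o.small.in_cong_bigtheta[OF theta] power_smallo_power_iff .
  with \<open>d < j\<close> show False by simp
qed

lemma hardy_field_hderiv_not_tendsto_nonzero:
  assumes "hardy_field H" "f \<in> H" "strongly_non_polynomial f" "c \<noteq> 0"
  shows "\<not> (hderiv j f \<longlongrightarrow> c) at_top"
proof
  assume "(hderiv j f \<longlongrightarrow> c) at_top"
  with hardy_field_has_real_derivative_hderiv[OF assms(1,2)]
  have "((\<lambda>t. f t / (t ^ j / fact j)) \<longlongrightarrow> c) at_top"
    by (rule tendsto_div_power_if_hderiv_tendsto)
  then have "((\<lambda>t. f t / (t ^ j / fact j) / fact j) \<longlongrightarrow> c / fact j) at_top"
    by (intro tendsto_divide tendsto_const) simp_all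
  moreover have "f t / (t ^ j / fact j) / fact j = f t / t ^ j" for t :: real
    by (simp add: field_simps)
  ultimately have "((\<lambda>t. f t / t ^ j) \<longlongrightarrow> c / fact j) at_top" by simp
  moreover have "c / fact j \<noteq> 0" using assms(4) by simp
  ultimately have "f \<in> \<Theta>(\<lambda>t. t ^ j)" by (rule bigthetaI_tendsto[rotated])
  with strongly_non_polynomial_not_bigtheta_power[OF assms(3)] show False by blast
qed

section \<open>Functions with integrable derivative\<close>

lemma abs_diff_le_if_abs_deriv_le_powr:
  fixes g g' :: "real \<Rightarrow> real"
  assumes D: "eventually (\<lambda>t. (g has_real_derivative g' t) (at t)) at_top"
    and bound: "eventually (\<lambda>t. \<bar>g' t\<bar> \<le> t powr \<beta>) at_top" and "\<beta> < -1"
  shows "\<exists>T. \<forall>x y. T \<le> x \<longrightarrow> x \<le> y \<longrightarrow> \<bar>g y - g x\<bar> \<le> x powr (\<beta> + 1) / - (\<beta> + 1)"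
proof -
  define \<gamma> where "\<gamma> = \<beta> + 1"
  have "\<gamma> < 0" using \<open>\<beta> < -1\<close> by (simp add: \<gamma>_def)
  obtain T where T: "\<And>t. t \<ge> T \<Longrightarrow> (g has_real_derivative g' t) (at t) \<and> \<bar>g' t\<bar> \<le> t powr \<beta> \<and> t > 0"
    using eventually_conj[OF D eventually_conj[OF bound eventually_gt_at_top[of "0::real"]]]
    unfolding eventually_at_top_linorder by blast
  have mono: "s * g x + x powr \<gamma> / \<gamma> \<le> s * g y + y powr \<gamma> / \<gamma>"
    if "\<bar>s\<bar> = 1" "T \<le> x" "x \<le> y" for s x y
  proof (rule DERIV_nonneg_imp_nondecreasing[OF that(3)])
    fix z assume "x \<le> z" "z \<le> y"
    then have z: "(g has_real_derivative g' z) (at z)" "\<bar>g' z\<bar> \<le> z powr \<beta>" "z > 0"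
      using T[of z] that(2) by auto
    have "((\<lambda>t. t powr \<gamma> / \<gamma>) has_real_derivative \<gamma> * z powr (\<gamma> - 1) / \<gamma>) (at z)"
      by (intro DERIV_cdivide has_real_derivative_powr z(3))
    moreover have "\<gamma> * z powr (\<gamma> - 1) / \<gamma> = z powr \<beta>"
      using \<open>\<gamma> < 0\<close> by (simp add: \<gamma>_def)
    ultimately have "((\<lambda>t. s * g t + t powr \<gamma> / \<gamma>) has_real_derivative s * g' z + z powr \<beta>) (at z)"
      using DERIV_add[OF DERIV_cmult[OF z(1)]] by simp
    moreover have "\<bar>s * g' z\<bar> \<le> z powr \<beta>" using z(2) that(1) by (simp add: abs_mult)
    then have "s * g' z + z powr \<beta> \<ge> 0" using abs_ge_minus_self[of "s * g' z"] by linarith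
    ultimately show "\<exists>d. ((\<lambda>t. s * g t + t powr \<gamma> / \<gamma>) has_real_derivative d) (at z) \<and> d \<ge> 0"
      by blast
  qed
  have "\<bar>g y - g x\<bar> \<le> x powr \<gamma> / - \<gamma>" if "T \<le> x" "x \<le> y" for x y
  proof -
    have "y powr \<gamma> / \<gamma> \<le> 0" using \<open>\<gamma> < 0\<close> by (simp add: divide_nonneg_neg)
    moreover from mono[of 1 x y] that have "g x + x powr \<gamma> / \<gamma> \<le> g y + y powr \<gamma> / \<gamma>" by simp
    moreover from mono[of "-1" x y] that have "- g x + x powr \<gamma> / \<gamma> \<le> - g y + y powr \<gamma> / \<gamma>" by simp
    moreover have "x powr \<gamma> / - \<gamma> = - (x powr \<gamma> / \<gamma>)" by simp
    ultimately show ?thesis by (simp only: abs_le_iff) linarith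
  qed
  then show ?thesis unfolding \<gamma>_def by blast
qed

lemma hardy_field_tendsto_nonzero_if_deriv_decays:
  assumes H: "hardy_field H" and g: "g \<in> H" and nz: "eventually (\<lambda>t. g t \<noteq> 0) at_top"
    and ord: "power_order g 0"
    and decay: "eventually (\<lambda>t. ln \<bar>deriv g t\<bar> \<le> \<beta> * ln t) at_top" and "\<beta> < -1"
  shows "\<exists>c. c \<noteq> 0 \<and> (g \<longlongrightarrow> c) at_top"
proof -
  define \<gamma> where "\<gamma> = \<beta> + 1"
  have "\<gamma> < 0" using \<open>\<beta> < -1\<close> by (simp add: \<gamma>_def)
  from decay eventually_gt_at_top[of "0::real"]
  have "eventually (\<lambda>t. \<bar>deriv g t\<bar> \<le> t powr \<beta>) at_top"
    by eventually_elim (simp add: abs_le_powr_if_ln_abs_le)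
  from abs_diff_le_if_abs_deriv_le_powr[OF hardy_field_has_real_derivative[OF H g] this \<open>\<beta> < -1\<close>]
  obtain T where T: "\<And>x y. T \<le> x \<Longrightarrow> x \<le> y \<Longrightarrow> \<bar>g y - g x\<bar> \<le> x powr \<gamma> / - \<gamma>"
    unfolding \<gamma>_def by blast
  have "eventually (\<lambda>y. \<bar>g y\<bar> \<le> \<bar>g T\<bar> + T powr \<gamma> / - \<gamma>) at_top"
    using eventually_ge_at_top[of T]
    by eventually_elim (use T abs_triangle_ineq2 in force)
  with hardy_field_tendsto_if_bounded[OF H g] obtain c where c: "(g \<longlongrightarrow> c) at_top" by blast
  have close: "\<bar>c - g x\<bar> \<le> x powr \<gamma> / - \<gamma>" if "T \<le> x" for x
  proof (rule tendsto_upperbound)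
    show "((\<lambda>y. \<bar>g y - g x\<bar>) \<longlongrightarrow> \<bar>c - g x\<bar>) at_top"
      by (intro tendsto_rabs tendsto_diff c tendsto_const)
    show "eventually (\<lambda>y. \<bar>g y - g x\<bar> \<le> x powr \<gamma> / - \<gamma>) at_top"
      using eventually_ge_at_top[of x] by eventually_elim (use T that in simp)
  qed simp
  have "c \<noteq> 0"
  proof
    assume "c = 0"
    have "- \<gamma> / 2 > 0" using \<open>\<gamma> < 0\<close> by simp
    from eventually_le_mult_ln[OF this, of "- ln (- \<gamma>)"] eventually_ge_at_top[of T]
      eventually_gt_at_top[of "0::real"] nz
    have "eventually (\<lambda>t. ln \<bar>g t\<bar> \<le> \<gamma> / 2 * ln t) at_top"
    proof eventually_elim
      case (elim t)
      have "\<bar>g t\<bar> \<le> t powr \<gamma> / - \<gamma>" using close[OF elim(2)] \<open>c = 0\<close> by simp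
      then have "ln \<bar>g t\<bar> \<le> ln (t powr \<gamma> / - \<gamma>)"
        using elim(3,4) \<open>\<gamma> < 0\<close> by (subst ln_le_cancel_iff) auto
      also have "\<dots> = \<gamma> * ln t - ln (- \<gamma>)"
        using elim(3) \<open>\<gamma> < 0\<close> by (simp add: ln_div ln_minus)
      finally show ?case using elim(1) by (simp add: algebra_simps)
    qed
    from power_order_le_if_ln_abs_le[OF ord this] \<open>\<gamma> < 0\<close> show False by simp
  qed
  with c show ?thesis by blast
qed

section \<open>Power orders in Hardy fields\<close>

lemma good_hardy_field_imp_hardy_field: "good_hardy_field H \<Longrightarrow> hardy_field H"
  by (simp add: good_hardy_field_def)

lemma le_functions_powr: "(\<lambda>x. x powr c) \<in> le_functions"
proof -
  have "(\<lambda>x. exp ((\<lambda>_. c) x * ln x)) \<in> le_functions"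
    by (intro le_exp le_mult le_const le_ln le_ident) (simp add: eventually_gt_at_top)
  moreover have "eventually (\<lambda>x. exp ((\<lambda>_. c) x * ln x) = x powr c) at_top"
    using eventually_gt_at_top[of "0::real"] by eventually_elim (simp add: powr_def)
  ultimately show ?thesis by (rule le_germ)
qed

lemma eventually_ln_abs_ge_if_asym_gg_powr:
  assumes "asym_gg f (\<lambda>t. t powr \<delta>)" "\<delta>' < \<delta>"
  shows "eventually (\<lambda>t. f t \<noteq> 0 \<and> \<delta>' * ln t \<le> ln \<bar>f t\<bar>) at_top"
proof -
  obtain C where C: "eventually (\<lambda>t. \<bar>t powr \<delta>\<bar> \<le> C * \<bar>f t\<bar>) at_top"
    using assms(1) unfolding asym_gg_def by blast
  have ge: "eventually (\<lambda>t. 0 < t \<and> t powr \<delta> \<le> C * \<bar>f t\<bar>) at_top"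
    using C eventually_gt_at_top[of "0::real"] by eventually_elim simp
  then obtain t0 where "0 < t0" "t0 powr \<delta> \<le> C * \<bar>f t0\<bar>"
    using eventually_happens'[OF trivial_limit_at_top_linorder] by blast
  then have "C > 0" by (smt (verit) powr_gt_zero zero_less_mult_iff abs_ge_zero)
  have "\<delta> - \<delta>' > 0" using assms(2) by simp
  from ge eventually_le_mult_ln[OF this, of "ln C"] show ?thesis
  proof eventually_elim
    case (elim t)
    then have "C * \<bar>f t\<bar> > 0" by (smt (verit) powr_gt_zero)
    then have "f t \<noteq> 0" by auto
    have "\<delta> * ln t = ln (t powr \<delta>)" using elim by simp
    also have "\<dots> \<le> ln (C * \<bar>f t\<bar>)" using elim \<open>C * \<bar>f t\<bar> > 0\<close> by (subst ln_le_cancel_iff) auto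
    also have "\<dots> = ln C + ln \<bar>f t\<bar>" using \<open>C > 0\<close> \<open>f t \<noteq> 0\<close> by (simp add: ln_mult)
    finally show ?case using elim \<open>f t \<noteq> 0\<close> by (simp add: algebra_simps)
  qed
qed

lemma eventually_ln_abs_le_if_asym_less_power:
  assumes "asym_less f (\<lambda>t. t ^ n)"
  shows "eventually (\<lambda>t. ln \<bar>f t\<bar> \<le> real n * ln t) at_top"
proof -
  have "eventually (\<lambda>t. \<bar>f t / t ^ n\<bar> < 1) at_top"
    using order_tendstoD(2)[OF tendsto_rabs[OF assms[unfolded asym_less_def]]] by simp
  with eventually_gt_at_top[of "1::real"] show ?thesis
  proof eventually_elim
    case (elim t)
    then have "\<bar>f t\<bar> < t ^ n" by simp
    show ?case
    proof (cases "f t = 0")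
      case False
      with \<open>\<bar>f t\<bar> < t ^ n\<close> elim(1) have "ln \<bar>f t\<bar> < ln (t ^ n)" by simp
      then show ?thesis by (simp add: ln_realpow)
    qed (use elim in simp)
  qed
qed

context
  fixes H :: "(real \<Rightarrow> real) set"
  assumes H: "good_hardy_field H"
begin

private lemma hardy: "hardy_field H"
  using H by (rule good_hardy_field_imp_hardy_field)

lemma good_hardy_field_powr: "(\<lambda>x. x powr c) \<in> H"
  using H le_functions_powr by (auto simp: good_hardy_field_def)

lemma good_hardy_field_abs_powr:
  assumes "h \<in> H" "eventually (\<lambda>t. h t \<noteq> 0) at_top" "(h \<longlongrightarrow> 0) at_top"
  shows "(\<lambda>t. \<bar>h t\<bar> powr r) \<in> H"
proof -
  define w where "w = (\<lambda>t. 1 / (h t * h t))"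
  have "w \<in> H"
    unfolding w_def using assms(1,2)
    by (intro hardy_field_inverse[OF hardy] hardy_field_mult[OF hardy]) (auto elim: eventually_mono)
  moreover have "filterlim w at_top at_top"
  proof -
    have "((\<lambda>t. h t * h t) \<longlongrightarrow> 0) at_top" using tendsto_mult[OF assms(3) assms(3)] by simp
    moreover have "eventually (\<lambda>t. 0 < h t * h t) at_top"
      using assms(2) by eventually_elim (metis not_real_square_gt_zero)
    ultimately have "filterlim (\<lambda>t. inverse (h t * h t)) at_top at_top" by (rule filterlim_inverse_at_top)
    then show ?thesis by (simp add: w_def inverse_eq_divide)
  qed
  ultimately have "(\<lambda>t. w t powr (- r / 2)) \<in> H"
    using H good_hardy_field_powr by (auto simp: good_hardy_field_def)
  moreover from assms(2) have "eventually (\<lambda>t. w t powr (- r / 2) = \<bar>h t\<bar> powr r) at_top"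
    by eventually_elim (simp add: w_def powr_def ln_div ln_mult abs_if ln_minus)
  ultimately show ?thesis by (rule hardy_field_cong[OF hardy])
qed

lemma log_deriv_in_good_hardy_field:
  assumes "h \<in> H" "eventually (\<lambda>t. h t \<noteq> 0) at_top"
  shows "(\<lambda>t. t * deriv h t / h t) \<in> H"
proof -
  have "(\<lambda>t. t) \<in> H" using H le_ident by (auto simp: good_hardy_field_def)
  with assms show ?thesis
    by (intro hardy_field_divide[OF hardy] hardy_field_mult[OF hardy] hardy_field_deriv[OF hardy])
qed

lemma power_order_trichotomy:
  assumes "h \<in> H" "eventually (\<lambda>t. h t \<noteq> 0) at_top"
  shows "(\<exists>L. ((\<lambda>t. t * deriv h t / h t) \<longlongrightarrow> L) at_top \<and> power_order h L)
    \<or> (\<forall>\<beta>. eventually (\<lambda>t. \<beta> * ln t \<le> ln \<bar>h t\<bar>) at_top)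
    \<or> (\<forall>\<beta>. eventually (\<lambda>t. ln \<bar>h t\<bar> \<le> \<beta> * ln t) at_top)"
proof -
  have D: "eventually (\<lambda>t. h t \<noteq> 0 \<and> (h has_real_derivative deriv h t) (at t)) at_top"
    using assms(2) hardy_field_has_real_derivative[OF hardy assms(1)] by (rule eventually_conj)
  from hardy_field_limit_trichotomy[OF hardy log_deriv_in_good_hardy_field[OF assms]]
  show ?thesis
  proof (elim disjE)
    assume "\<exists>L. ((\<lambda>t. t * deriv h t / h t) \<longlongrightarrow> L) at_top"
    then obtain L where L: "((\<lambda>t. t * deriv h t / h t) \<longlongrightarrow> L) at_top" ..
    show ?thesis by (intro disjI1 exI[of _ L] conjI L power_order_if_log_deriv_tendsto[OF D])
  next
    assume lim: "filterlim (\<lambda>t. t * deriv h t / h t) at_top at_top"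
    have "eventually (\<lambda>t. \<beta> * ln t \<le> ln \<bar>h t\<bar>) at_top" for \<beta>
    proof -
      have "eventually (\<lambda>t. \<beta> + 1 \<le> t * deriv h t / h t) at_top"
        using lim unfolding filterlim_at_top by blast
      moreover have "\<beta> < \<beta> + 1" by simp
      ultimately show ?thesis by (rule eventually_ln_abs_ge_if_log_deriv_ge[OF D])
    qed
    then show ?thesis by blast
  next
    assume lim: "filterlim (\<lambda>t. t * deriv h t / h t) at_bot at_top"
    have "eventually (\<lambda>t. ln \<bar>h t\<bar> \<le> \<beta> * ln t) at_top" for \<beta>
    proof -
      have "eventually (\<lambda>t. t * deriv h t / h t \<le> \<beta> - 1) at_top"
        using lim unfolding filterlim_at_bot by blast
      moreover have "\<beta> - 1 < \<beta>" by simp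
      ultimately show ?thesis by (rule eventually_ln_abs_le_if_log_deriv_le[OF D])
    qed
    then show ?thesis by blast
  qed
qed

lemma log_deriv_tendsto_if_power_order:
  assumes "h \<in> H" "eventually (\<lambda>t. h t \<noteq> 0) at_top" and ord: "power_order h b"
  shows "((\<lambda>t. t * deriv h t / h t) \<longlongrightarrow> b) at_top"
  using power_order_trichotomy[OF assms(1,2)]
proof (elim disjE)
  assume "\<exists>L. ((\<lambda>t. t * deriv h t / h t) \<longlongrightarrow> L) at_top \<and> power_order h L"
  then show ?thesis using power_order_unique[OF ord] by blast
next
  assume "\<forall>\<beta>. eventually (\<lambda>t. \<beta> * ln t \<le> ln \<bar>h t\<bar>) at_top"
  from power_order_ge_if_ln_abs_ge[OF ord this[rule_format, of "b + 1"]] show ?thesis by simp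
next
  assume "\<forall>\<beta>. eventually (\<lambda>t. ln \<bar>h t\<bar> \<le> \<beta> * ln t) at_top"
  from power_order_le_if_ln_abs_le[OF ord this[rule_format, of "b - 1"]] show ?thesis by simp
qed

lemma power_order_if_ln_abs_bounds:
  assumes "h \<in> H" "eventually (\<lambda>t. h t \<noteq> 0) at_top"
    and lower: "eventually (\<lambda>t. \<beta>\<^sub>1 * ln t \<le> ln \<bar>h t\<bar>) at_top"
    and upper: "eventually (\<lambda>t. ln \<bar>h t\<bar> \<le> \<beta>\<^sub>2 * ln t) at_top"
  shows "\<exists>b. \<beta>\<^sub>1 \<le> b \<and> b \<le> \<beta>\<^sub>2 \<and> power_order h b"
  using power_order_trichotomy[OF assms(1,2)]
proof (elim disjE)
  assume "\<exists>L. ((\<lambda>t. t * deriv h t / h t) \<longlongrightarrow> L) at_top \<and> power_order h L"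
  then obtain b where b: "power_order h b" by blast
  have "\<beta>\<^sub>1 \<le> b" "b \<le> \<beta>\<^sub>2"
    using power_order_ge_if_ln_abs_ge[OF b lower] power_order_le_if_ln_abs_le[OF b upper] .
  with b show ?thesis by blast
next
  assume "\<forall>\<beta>. eventually (\<lambda>t. \<beta> * ln t \<le> ln \<bar>h t\<bar>) at_top"
  from eventually_mult_ln_bounds_le[OF this[rule_format, of "\<beta>\<^sub>2 + 1"] upper] show ?thesis by simp
next
  assume "\<forall>\<beta>. eventually (\<lambda>t. ln \<bar>h t\<bar> \<le> \<beta> * ln t) at_top"
  from eventually_mult_ln_bounds_le[OF lower this[rule_format, of "\<beta>\<^sub>1 - 1"]] show ?thesis by simp
qed

lemma power_order_deriv:
  assumes h: "h \<in> H" and nz: "eventually (\<lambda>t. h t \<noteq> 0) at_top"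
    and ord: "power_order h b" and "b \<noteq> 0"
  shows "eventually (\<lambda>t. deriv h t \<noteq> 0) at_top \<and> power_order (deriv h) (b - 1)"
proof -
  define q where "q = (\<lambda>t. t * deriv h t / h t)"
  have q_lim: "(q \<longlongrightarrow> b) at_top"
    unfolding q_def by (rule log_deriv_tendsto_if_power_order[OF h nz ord])
  have q_nz: "eventually (\<lambda>t. q t \<noteq> 0) at_top"
    using tendsto_imp_eventually_ne[OF q_lim \<open>b \<noteq> 0\<close>] .
  have t_nz: "eventually (\<lambda>t::real. t \<noteq> 0) at_top"
    using eventually_gt_at_top[of "0::real"] by eventually_elim simp
  have qh_nz: "eventually (\<lambda>t. q t * h t \<noteq> 0) at_top"
    using q_nz nz by eventually_elim simp
  have ord': "power_order (\<lambda>t. q t * h t / t) (0 + b - 1)"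
    by (intro power_order_divide power_order_mult power_order_if_tendsto_nonzero[OF q_lim \<open>b \<noteq> 0\<close>]
        ord power_order_ident q_nz nz qh_nz t_nz)
  have eq: "eventually (\<lambda>t. q t * h t / t = deriv h t) at_top"
    using nz eventually_gt_at_top[of "0::real"] by eventually_elim (simp add: q_def)
  have "power_order (deriv h) (b - 1)"
    using power_order_cong[OF eq ord'] by simp
  moreover have "eventually (\<lambda>t. deriv h t \<noteq> 0) at_top"
    using eq qh_nz t_nz by eventually_elim auto
  ultimately show ?thesis by blast
qed

lemma power_order_deriv_of_order_zero:
  assumes h: "h \<in> H" and nz: "eventually (\<lambda>t. h t \<noteq> 0) at_top" and ord: "power_order h 0"
    and no_limit: "\<And>c. c \<noteq> 0 \<Longrightarrow> \<not> (h \<longlongrightarrow> c) at_top"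
  shows "eventually (\<lambda>t. deriv h t \<noteq> 0) at_top \<and> power_order (deriv h) (-1)"
proof -
  have h': "deriv h \<in> H" by (rule hardy_field_deriv[OF hardy h])
  have nz': "eventually (\<lambda>t. deriv h t \<noteq> 0) at_top"
    by (rule hardy_field_deriv_eventually_nonzero[OF hardy h nz no_limit])
  have upper: "eventually (\<lambda>t. ln \<bar>deriv h t\<bar> \<le> (0 + e - 1) * ln t) at_top" if "e > 0" for e
    using log_deriv_tendsto_if_power_order[OF h nz ord] ord nz nz' that
    by (rule eventually_ln_abs_deriv_le_if_log_deriv_tendsto_zero)
  \<comment> \<open>a derivative decaying faster than 1/t would make h converge to a nonzero constant\<close>
  have no_decay: "\<not> eventually (\<lambda>t. ln \<bar>deriv h t\<bar> \<le> \<beta> * ln t) at_top" if "\<beta> < -1" for \<beta>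
    using hardy_field_tendsto_nonzero_if_deriv_decays[OF hardy h nz ord _ that] no_limit by blast
  from power_order_trichotomy[OF h' nz'] show ?thesis
  proof (elim disjE)
    assume "\<exists>L. ((\<lambda>t. t * deriv (deriv h) t / deriv h t) \<longlongrightarrow> L) at_top \<and> power_order (deriv h) L"
    then obtain L where L: "power_order (deriv h) L" by blast
    have "L \<le> -1"
    proof (rule field_le_epsilon)
      fix e :: real assume "e > 0"
      from power_order_le_if_ln_abs_le[OF L upper[OF this]] show "L \<le> -1 + e" by simp
    qed
    moreover have "\<not> L < -1"
    proof
      assume "L < -1"
      then have "(- 1 - L) / 2 > 0" by simp
      from power_orderD[OF L this]
      have "eventually (\<lambda>t. ln \<bar>deriv h t\<bar> \<le> ((L - 1) / 2) * ln t) at_top"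
        by (auto elim: eventually_mono simp: field_simps)
      moreover have "(L - 1) / 2 < -1" using \<open>L < -1\<close> by simp
      ultimately show False using no_decay by blast
    qed
    ultimately show ?thesis using L nz' by simp
  next
    assume "\<forall>\<beta>. eventually (\<lambda>t. \<beta> * ln t \<le> ln \<bar>deriv h t\<bar>) at_top"
    from eventually_mult_ln_bounds_le[OF this[rule_format, of 0] upper[of "1 / 2"]] show ?thesis by simp
  next
    assume decay: "\<forall>\<beta>. eventually (\<lambda>t. ln \<bar>deriv h t\<bar> \<le> \<beta> * ln t) at_top"
    have "(-2::real) < -1" by simp
    from no_decay[OF this] decay show ?thesis by blast
  qed
qed

lemma power_order_if_strongly_non_polynomial:
  assumes f: "f \<in> H" and snp: "strongly_non_polynomial f"
    and "\<delta> > 0" and growth: "asym_gg f (\<lambda>t. t powr \<delta>)"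
  shows "\<exists>a>0. eventually (\<lambda>t. f t \<noteq> 0) at_top \<and> power_order f a"
proof -
  have "\<delta> / 2 < \<delta>" using \<open>\<delta> > 0\<close> by simp
  from eventually_ln_abs_ge_if_asym_gg_powr[OF growth this]
  have nz: "eventually (\<lambda>t. f t \<noteq> 0) at_top"
    and lower: "eventually (\<lambda>t. \<delta> / 2 * ln t \<le> ln \<bar>f t\<bar>) at_top"
    by (auto elim: eventually_mono)
  from snp obtain d where "asym_less f (\<lambda>t. t ^ (d + 1))"
    unfolding strongly_non_polynomial_def by blast
  from eventually_ln_abs_le_if_asym_less_power[OF this]
  have upper: "eventually (\<lambda>t. ln \<bar>f t\<bar> \<le> real (d + 1) * ln t) at_top" .
  from power_order_if_ln_abs_bounds[OF f nz lower upper] obtain a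
    where "\<delta> / 2 \<le> a" "power_order f a" by blast
  with \<open>\<delta> > 0\<close> nz show ?thesis by (intro exI[of _ a]) simp
qed

lemma power_order_hderiv:
  assumes f: "f \<in> H" and snp: "strongly_non_polynomial f"
    and "\<delta> > 0" and growth: "asym_gg f (\<lambda>t. t powr \<delta>)"
  shows "\<exists>a>0. \<forall>j. eventually (\<lambda>t. hderiv j f t \<noteq> 0) at_top \<and> power_order (hderiv j f) (a - real j)"
proof -
  obtain a where "a > 0" and f_nz: "eventually (\<lambda>t. f t \<noteq> 0) at_top" and f_ord: "power_order f a"
    using power_order_if_strongly_non_polynomial[OF assms] by blast
  have "eventually (\<lambda>t. hderiv j f t \<noteq> 0) at_top \<and> power_order (hderiv j f) (a - real j)" for j
  proof (induction j)
    case 0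
    then show ?case using f_nz f_ord by (simp add: hderiv_def)
  next
    case (Suc j)
    then have nz: "eventually (\<lambda>t. hderiv j f t \<noteq> 0) at_top"
      and ord: "power_order (hderiv j f) (a - real j)" by blast+
    have h: "hderiv j f \<in> H" by (rule hardy_field_hderiv[OF hardy f])
    have no_limit: "\<not> (hderiv j f \<longlongrightarrow> c) at_top" if "c \<noteq> 0" for c
      by (rule hardy_field_hderiv_not_tendsto_nonzero[OF hardy f snp that])
    have "eventually (\<lambda>t. deriv (hderiv j f) t \<noteq> 0) at_top
      \<and> power_order (deriv (hderiv j f)) (a - real j - 1)"
    proof (cases "a - real j = 0")
      case True
      with power_order_deriv_of_order_zero[OF h nz _ no_limit] ord show ?thesis by simp
    next
      case False
      from power_order_deriv[OF h nz ord False] show ?thesis .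
    qed
    then show ?case by (simp add: hderiv_def algebra_simps)
  qed
  with \<open>a > 0\<close> show ?thesis by blast
qed

end

section \<open>The classes S(f,k)\<close>

definition hderiv_scale :: "(real \<Rightarrow> real) \<Rightarrow> nat \<Rightarrow> real \<Rightarrow> real" where
  "hderiv_scale f k = (\<lambda>t. \<bar>hderiv k f t\<bar> powr (- 1 / real k))"

lemma S_class_iff:
  "g \<in> S_class H f k \<longleftrightarrow>
     g \<in> H \<and> asym_leq (hderiv_scale f k) g \<and> asym_less g (hderiv_scale f (k + 1))"
  by (simp add: S_class_def hderiv_scale_def)

lemma asym_leq_refl: "eventually (\<lambda>t. h t \<noteq> 0) at_top \<Longrightarrow> asym_leq h h"
  unfolding asym_leq_def
  by (intro disjI1 exI[of _ 1] conjI tendsto_eventually) (auto elim: eventually_mono)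

lemma asym_less_if_power_order_less:
  assumes "power_order g b\<^sub>1" "power_order h b\<^sub>2"
    and "eventually (\<lambda>t. g t \<noteq> 0) at_top" "eventually (\<lambda>t. h t \<noteq> 0) at_top" "b\<^sub>1 < b\<^sub>2"
  shows "asym_less g h"
  unfolding asym_less_def
  using power_order_tendsto_zero[OF power_order_divide[OF assms(1-4)]] assms(5) by simp

lemma asym_leq_if_power_order_less:
  assumes "power_order g b\<^sub>1" "power_order h b\<^sub>2"
    and "eventually (\<lambda>t. g t \<noteq> 0) at_top" "eventually (\<lambda>t. h t \<noteq> 0) at_top" "b\<^sub>1 < b\<^sub>2"
  shows "asym_leq g h"
  unfolding asym_leq_def
  using power_order_filterlim_abs_at_top[OF power_order_divide[OF assms(2,1,4,3)]] assms(5) by simp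

lemma asym_leq_if_not_asym_less:
  assumes "hardy_field H" "(\<lambda>t. v t / u t) \<in> H" "\<not> asym_less v u"
  shows "asym_leq u v"
  using hardy_field_limit_trichotomy[OF assms(1,2)]
proof (elim disjE)
  assume "\<exists>L. ((\<lambda>t. v t / u t) \<longlongrightarrow> L) at_top"
  then obtain L where L: "((\<lambda>t. v t / u t) \<longlongrightarrow> L) at_top" ..
  with assms(3) have "L \<noteq> 0" unfolding asym_less_def by auto
  with tendsto_rabs[OF L] show ?thesis
    unfolding asym_leq_def by (intro disjI1 exI[of _ "\<bar>L\<bar>"]) simp
next
  assume "filterlim (\<lambda>t. v t / u t) at_top at_top"
  then have "filterlim (\<lambda>t. \<bar>v t / u t\<bar>) at_top at_top"
    by (rule filterlim_at_top_mono) (intro always_eventually allI abs_ge_self)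
  then show ?thesis unfolding asym_leq_def by blast
next
  assume "filterlim (\<lambda>t. v t / u t) at_bot at_top"
  then have "filterlim (\<lambda>t. - (v t / u t)) at_top at_top"
    by (simp add: filterlim_uminus_at_top)
  then have "filterlim (\<lambda>t. \<bar>v t / u t\<bar>) at_top at_top"
    by (rule filterlim_at_top_mono) (intro always_eventually allI abs_ge_minus_self)
  then show ?thesis unfolding asym_leq_def by blast
qed

lemma ex_index_with_exponent_bounds:
  fixes a c :: real
  assumes "a > 0" "1 / (a + 1) < c" "c < 1"
  shows "\<exists>k. real k > a \<and> 1 - a / real k < c \<and> c \<le> 1 - a / real (k + 1)"
proof -
  define N where "N = a / (1 - c)"
  have "a + 1 < N"
    using assms by (simp add: N_def field_simps)
  define k where "k = nat (\<lceil>N\<rceil> - 1)"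
  have "1 \<le> \<lceil>N\<rceil>" using \<open>a + 1 < N\<close> \<open>a > 0\<close> by simp
  then have "real k = of_int \<lceil>N\<rceil> - 1" by (simp add: k_def)
  then have k: "real k < N" "N \<le> real k + 1" using ceiling_correct[of N] by linarith+
  then have "real k > a" using \<open>a + 1 < N\<close> by linarith
  moreover have "1 - a / real k < c" "c \<le> 1 - a / real (k + 1)"
    using k \<open>real k > a\<close> assms by (simp_all add: N_def field_simps)
  ultimately show ?thesis by blast
qed

context
  fixes H f a
  assumes H: "good_hardy_field H" and f: "f \<in> H" and "a > 0"
    and hderiv_order: "\<And>j. eventually (\<lambda>t. hderiv j f t \<noteq> 0) at_top
      \<and> power_order (hderiv j f) (a - real j)"
begin

lemma hderiv_tendsto_zero: "real k > a \<Longrightarrow> (hderiv k f \<longlongrightarrow> 0) at_top"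
  using hderiv_order[of k] by (intro power_order_tendsto_zero) auto

lemma hderiv_scale_nonzero: "eventually (\<lambda>t. hderiv_scale f k t \<noteq> 0) at_top"
  using hderiv_order[of k] by (auto simp: hderiv_scale_def elim: eventually_mono)

lemma power_order_hderiv_scale:
  assumes "k > 0"
  shows "power_order (hderiv_scale f k) (1 - a / real k)"
proof -
  have eq: "- 1 / real k * (a - real k) = 1 - a / real k" using assms by (simp add: field_simps)
  from power_order_abs_powr[OF conjunct2[OF hderiv_order[of k]], of "- 1 / real k"]
  show ?thesis unfolding hderiv_scale_def eq .
qed

lemma hderiv_scale_in_hardy_field: "real k > a \<Longrightarrow> hderiv_scale f k \<in> H"
  unfolding hderiv_scale_def
  using hderiv_order[of k]
  by (intro good_hardy_field_abs_powr[OF H] hardy_field_hderiv[OF good_hardy_field_imp_hardy_field[OF H] f] hderiv_tendsto_zero) auto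

lemma hderiv_scale_in_S_class: "real k > a \<Longrightarrow> hderiv_scale f k \<in> S_class H f k"
  unfolding S_class_iff
  using \<open>a > 0\<close>
  by (auto intro!: hderiv_scale_in_hardy_field asym_leq_refl hderiv_scale_nonzero
      asym_less_if_power_order_less[OF power_order_hderiv_scale power_order_hderiv_scale]
      simp: field_simps)

lemma powr_in_S_class:
  assumes "real k > a" "1 - a / real k < c" "c \<le> 1 - a / real (k + 1)"
  shows "(\<lambda>t. t powr c) \<in> S_class H f k \<or> (\<lambda>t. t powr c) \<in> S_class H f (k + 1)"
proof -
  have "k > 0" using assms(1) \<open>a > 0\<close> by simp
  have powr_nz: "eventually (\<lambda>t. t powr c \<noteq> 0) at_top"
    using eventually_gt_at_top[of "0::real"] by eventually_elim simp
  have powr_H: "(\<lambda>t. t powr c) \<in> H" by (rule good_hardy_field_powr[OF H])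
  show ?thesis
  proof (cases "asym_less (\<lambda>t. t powr c) (hderiv_scale f (k + 1))")
    case True
    have "asym_leq (hderiv_scale f k) (\<lambda>t. t powr c)"
      using power_order_hderiv_scale[OF \<open>k > 0\<close>] power_order_powr hderiv_scale_nonzero powr_nz assms(2)
      by (rule asym_leq_if_power_order_less)
    with True powr_H show ?thesis unfolding S_class_iff by blast
  next
    case False
    have "(\<lambda>t. t powr c / hderiv_scale f (k + 1) t) \<in> H"
      using assms(1)
      by (intro hardy_field_divide[OF good_hardy_field_imp_hardy_field[OF H]] powr_H hderiv_scale_in_hardy_field hderiv_scale_nonzero) simp
    from asym_leq_if_not_asym_less[OF good_hardy_field_imp_hardy_field[OF H] this False]
    have "asym_leq (hderiv_scale f (k + 1)) (\<lambda>t. t powr c)" .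
    moreover have "asym_less (\<lambda>t. t powr c) (hderiv_scale f (k + 1 + 1))"
    proof (rule asym_less_if_power_order_less[OF power_order_powr power_order_hderiv_scale
          powr_nz hderiv_scale_nonzero])
      have "a / real (k + 1 + 1) < a / real (k + 1)"
        using \<open>a > 0\<close> by (intro divide_strict_left_mono) auto
      then show "c < 1 - a / real (k + 1 + 1)" using assms(3) by linarith
    qed simp
    ultimately show ?thesis using powr_H unfolding S_class_iff by blast
  qed
qed

lemma powr_notin_S_class:
  assumes "1 - a / real (k + 1) < c"
  shows "(\<lambda>t. t powr c) \<notin> S_class H f k"
proof
  assume "(\<lambda>t. t powr c) \<in> S_class H f k"
  then have "((\<lambda>t. t powr c / hderiv_scale f (k + 1) t) \<longlongrightarrow> 0) at_top"
    unfolding S_class_iff asym_less_def by blast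
  moreover have "eventually (\<lambda>t. t powr c \<noteq> 0) at_top"
    using eventually_gt_at_top[of "0::real"] by eventually_elim simp
  then have "power_order (\<lambda>t. t powr c / hderiv_scale f (k + 1) t) (c - (1 - a / real (k + 1)))"
    by (intro power_order_divide power_order_powr power_order_hderiv_scale hderiv_scale_nonzero) simp_all
  ultimately have "c - (1 - a / real (k + 1)) \<le> 0"
    by (rule power_order_nonpos_if_tendsto_zero[rotated])
  with assms show False by simp
qed

lemma S_class_eventually_nonempty: "\<exists>K. \<forall>k\<ge>K. S_class H f k \<noteq> {}"
proof (intro exI allI impI)
  fix k assume "nat \<lceil>a\<rceil> + 1 \<le> k"
  then have "real k > a" using real_nat_ceiling_ge[of a] by linarith
  then show "S_class H f k \<noteq> {}" using hderiv_scale_in_S_class by blast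
qed

lemma powr_in_S_class_near_one:
  "\<exists>c\<^sub>1<1. \<forall>c. c\<^sub>1 < c \<and> c < 1 \<longrightarrow>
     (\<exists>k. (hderiv k f \<longlongrightarrow> 0) at_top \<and> (\<lambda>t. t powr c) \<in> S_class H f k)"
proof (intro exI[of _ "1 / (a + 1)"] conjI allI impI)
  show "1 / (a + 1) < 1" using \<open>a > 0\<close> by simp
  fix c assume "1 / (a + 1) < c \<and> c < 1"
  with ex_index_with_exponent_bounds[OF \<open>a > 0\<close>] obtain k
    where k: "real k > a" "1 - a / real k < c" "c \<le> 1 - a / real (k + 1)" by blast
  then have "real (k + 1) > a" by simp
  with powr_in_S_class[OF k] hderiv_tendsto_zero k(1)
  show "\<exists>k. (hderiv k f \<longlongrightarrow> 0) at_top \<and> (\<lambda>t. t powr c) \<in> S_class H f k" by blast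
qed

lemma not_all_powr_near_one_in_S_class:
  "\<not> (\<exists>c\<^sub>0<1. \<forall>c. c\<^sub>0 < c \<and> c < 1 \<longrightarrow> (\<lambda>t. t powr c) \<in> S_class H f k)"
proof
  assume "\<exists>c\<^sub>0<1. \<forall>c. c\<^sub>0 < c \<and> c < 1 \<longrightarrow> (\<lambda>t. t powr c) \<in> S_class H f k"
  then obtain c\<^sub>0 where "c\<^sub>0 < 1" and in_S: "\<And>c. c\<^sub>0 < c \<Longrightarrow> c < 1 \<Longrightarrow> (\<lambda>t. t powr c) \<in> S_class H f k"
    by blast
  define m where "m = max c\<^sub>0 (1 - a / real (k + 1))"
  have "m < 1" "c\<^sub>0 \<le> m" "1 - a / real (k + 1) \<le> m"
    using \<open>c\<^sub>0 < 1\<close> \<open>a > 0\<close> by (auto simp: m_def)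
  define c where "c = (m + 1) / 2"
  have "m < c" "c < 1" using \<open>m < 1\<close> by (simp_all add: c_def)
  with \<open>c\<^sub>0 \<le> m\<close> \<open>1 - a / real (k + 1) \<le> m\<close>
  have "c\<^sub>0 < c" "1 - a / real (k + 1) < c" by simp_all
  with in_S \<open>c < 1\<close> powr_notin_S_class show False by blast
qed

end

theorem lemmaA3:
  fixes H :: "(real \<Rightarrow> real) set" and f :: "real \<Rightarrow> real" and \<delta> :: real
  assumes H: "good_hardy_field H"
    and fH: "f \<in> H"
    and snp: "strongly_non_polynomial f"
    and \<delta>: "\<delta> > 0"
    and growth: "asym_gg f (\<lambda>t. t powr \<delta>)"
  shows "(\<exists>K. \<forall>k\<ge>K. S_class H f k \<noteq> {})
    \<and> (\<exists>c1<1. \<forall>c. c1 < c \<and> c < 1 \<longrightarrow>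
          (\<exists>k0. ((hderiv k0 f) \<longlongrightarrow> 0) at_top \<and> (\<lambda>t. t powr c) \<in> S_class H f k0))
    \<and> (\<forall>k. ((hderiv k f) \<longlongrightarrow> 0) at_top \<longrightarrow>
          \<not> (\<exists>c0<1. \<forall>c. c0 < c \<and> c < 1 \<longrightarrow> (\<lambda>t. t powr c) \<in> S_class H f k))"
proof -
  obtain a where "a > 0" and order: "\<And>j. eventually (\<lambda>t. hderiv j f t \<noteq> 0) at_top
      \<and> power_order (hderiv j f) (a - real j)"
    using power_order_hderiv[OF H fH snp \<delta> growth] by blast
  show ?thesis
    using S_class_eventually_nonempty[OF H fH \<open>a > 0\<close> order]
      powr_in_S_class_near_one[OF H fH \<open>a > 0\<close> order]
      not_all_powr_near_one_in_S_class[OF H fH \<open>a > 0\<close> order]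
    by blast
qed

end
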